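(* Suppose $0<1/n\ll\nu,1/k,1/\ell$ and $\nu\ll\alpha,1-\alpha$, where $\alpha\in(0,1)$ and $k\ge2$, $\ell$ are integers. Let $F$ be an $\ell$-vertex $k$-graph and $H$ an $n$-vertex $k$-graph. If $t_{\rm inj}(F,H)=\alpha\pm\nu$, then there exists an $n$-vertex $k$-graph $G$ on $V(H)$ with $t_{\rm inj}(F,G)=\alpha\pm1/n$ and $|G\triangle H|\le\big(\frac{2\nu}{\min\{\alpha,1-\alpha\}}\big)^{1/\ell}\binom nk$.
   Context: Hierarchy convention: a statement asserted for $0<a_1\ll a_2\ll\dots$ means there are non-decreasing functions such that it holds whenever each parameter is at most the corresponding function of the parameters to its right; integer parameters appear as reciprocals. $x=y\pm z$ means $|x-y|\le z$. A $k$-graph is a $k$-uniform hypergraph identified with its edge set. For $k$-graphs $F,H$ with $|V(H)|=n$, $\mathrm{inj}(F,H)$ is the number of injective maps $f:V(F)\to V(H)$ mapping every edge of $F$ onto an edge of $H$, and $t_{\rm inj}(F,H)=\mathrm{inj}(F,H)/(n)_{|V(F)|}$, where $(n)_r=n(n-1)\cdots(n-r+1)$. *)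

theory Defs
  imports "HOL-Library.FuncSet" Complex_Main
begin

definition kgraph :: "nat \<Rightarrow> 'a set \<Rightarrow> 'a set set \<Rightarrow> bool" where
  "kgraph k V E \<longleftrightarrow> finite V \<and> (\<forall>e\<in>E. e \<subseteq> V \<and> card e = k)"

definition falling :: "nat \<Rightarrow> nat \<Rightarrow> nat" where
  "falling n r = (\<Prod>i<r. n - i)"

definition inj_hom :: "'a set \<Rightarrow> 'a set set \<Rightarrow> 'b set \<Rightarrow> 'b set set \<Rightarrow> nat" where
  "inj_hom VF EF VH EH = card {f \<in> VF \<rightarrow>\<^sub>E VH. inj_on f VF \<and> (\<forall>e\<in>EF. f ` e \<in> EH)}"

definition t_inj :: "'a set \<Rightarrow> 'a set set \<Rightarrow> 'b set \<Rightarrow> 'b set set \<Rightarrow> real" where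
  "t_inj VF EF VH EH = real (inj_hom VF EF VH EH) / real (falling (card VH) (card VF))"

end

theory Submission
  imports Defs
begin

text \<open>
  Adding or deleting one edge changes the number of injective copies of F by at most
  |E(F)| k^k n^(l-k), a 1/n-fraction of all injective maps once n is large, so along any
  sequence of single-edge changes t_inj moves in steps of at most 1/n; a discrete intermediate
  value argument then finds G as soon as alpha is bracketed. To bracket alpha, pick by
  averaging an m-set W, m ~ delta n with delta^l = 2 nu / min{alpha, 1 - alpha}, containing at
  most the proportion (m)_l/(n)_l of the copies of F (if t_inj(F,H) <= alpha) or of the
  non-copies (otherwise). Adding all k-subsets of W as edges, respectively deleting them, then
  turns all (m)_l injective maps into W into copies, respectively non-copies, which pushes the
  density past alpha while changing at most binom(m,k) <= delta binom(n,k) edges.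
\<close>

section \<open>Falling factorials\<close>

lemma falling_pos: "l \<le> n \<Longrightarrow> 0 < falling n l"
  unfolding falling_def by (rule prod_pos) auto

lemma power_diff_le_falling: "(n - l) ^ l \<le> falling n l"
  unfolding falling_def using prod_mono[of "{..<l}" "\<lambda>_. n - l" "\<lambda>i. n - i"] by auto

lemma falling_le_power: "falling n l \<le> n ^ l"
  unfolding falling_def using prod_mono[of "{..<l}" "\<lambda>i. n - i" "\<lambda>_. n"] by auto

lemma half_power_le_falling:
  fixes r :: real
  assumes r: "r \<le> real m + 1" "2 * real l * (real l + 1) \<le> r"
  shows "r ^ l / 2 \<le> real (falling m l)"
proof (cases "l = 0")
  case True
  then show ?thesis by (simp add: falling_def)
next
  case False
  define x where "x = (real l + 1) / r"
  have "1 \<le> real l" using False by simp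
  then have "2 * 1 * (real l + 1) \<le> 2 * real l * (real l + 1)"
    by (intro mult_right_mono mult_left_mono) auto
  then have l1_r: "2 * (real l + 1) \<le> r" using r(2) by linarith
  then have r_pos: "0 < r" by simp
  have "real l * (real l + 1) \<le> r / 2" using r(2) by linarith
  then have lx: "real l * x \<le> 1 / 2"
    using r_pos unfolding x_def by (simp add: field_simps)
  have x01: "0 \<le> x" "x \<le> 1" using l1_r r_pos unfolding x_def by (auto simp: field_simps)
  have "real l \<le> real m" using l1_r r(1) \<open>1 \<le> real l\<close> by (simp add: algebra_simps)
  then have lm: "l \<le> m" by simp
  have "1 / 2 \<le> 1 + real l * (- x)" using lx by simp
  then have "r ^ l * (1 / 2) \<le> r ^ l * (1 + real l * (- x))"
    using r_pos by (intro mult_left_mono) auto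
  then have "r ^ l / 2 \<le> r ^ l * (1 + real l * (- x))" by simp
  also have "\<dots> \<le> r ^ l * (1 + (- x)) ^ l"
    using Bernoulli_inequality[of "- x" l] x01 r_pos by (intro mult_left_mono) auto
  also have "\<dots> = (r * (1 - x)) ^ l"
    by (simp add: power_mult_distrib)
  also have "r * (1 - x) = r - real l - 1"
    using r_pos unfolding x_def by (simp add: field_simps)
  also have "(r - real l - 1) ^ l \<le> real (m - l) ^ l"
    using l1_r r(1) lm by (intro power_mono) auto
  also have "\<dots> \<le> real (falling m l)"
    by (simp only: of_nat_power[symmetric] of_nat_le_iff power_diff_le_falling)
  finally show ?thesis .
qed

section \<open>Injective maps and copies of F\<close>

definition inj_maps :: "'a set \<Rightarrow> 'b set \<Rightarrow> ('a \<Rightarrow> 'b) set" where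
  "inj_maps A B = {f \<in> A \<rightarrow>\<^sub>E B. inj_on f A}"

definition homs :: "'a set \<Rightarrow> 'a set set \<Rightarrow> 'b set \<Rightarrow> 'b set set \<Rightarrow> ('a \<Rightarrow> 'b) set" where
  "homs VF EF V G = {f \<in> inj_maps VF V. \<forall>e\<in>EF. f ` e \<in> G}"

lemma finite_inj_maps: "finite A \<Longrightarrow> finite B \<Longrightarrow> finite (inj_maps A B)"
  unfolding inj_maps_def by (rule finite_subset[OF _ finite_PiE]) auto

lemma card_inj_maps: "finite A \<Longrightarrow> finite B \<Longrightarrow> card (inj_maps A B) = falling (card B) (card A)"
  unfolding inj_maps_def falling_def
  using card_inj_on_subset_funcset[of A B A] by (simp add: atLeast0LessThan)

lemma inj_maps_mono: "B \<subseteq> C \<Longrightarrow> inj_maps A B \<subseteq> inj_maps A C"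
  unfolding inj_maps_def by (auto simp: PiE_iff)

lemma inj_maps_image_card:
  assumes "f \<in> inj_maps A B" "e \<subseteq> A" "card e = k"
  shows "f ` e \<subseteq> B \<and> card (f ` e) = k"
  using assms unfolding inj_maps_def by (auto simp: PiE_iff card_image inj_on_subset)

lemma homs_subset_inj_maps: "homs VF EF V G \<subseteq> inj_maps VF V"
  unfolding homs_def by auto

lemma finite_homs: "finite VF \<Longrightarrow> finite V \<Longrightarrow> finite (homs VF EF V G)"
  by (rule finite_subset[OF homs_subset_inj_maps finite_inj_maps])

lemma homs_mono: "G \<subseteq> G' \<Longrightarrow> homs VF EF V G \<subseteq> homs VF EF V G'"
  unfolding homs_def by auto

definition map_density :: "'a set \<Rightarrow> 'b set \<Rightarrow> ('a \<Rightarrow> 'b) set \<Rightarrow> real" where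
  "map_density A B X = real (card X) / real (falling (card B) (card A))"

lemma t_inj_eq_map_density: "t_inj VF EF V G = map_density VF V (homs VF EF V G)"
  unfolding t_inj_def inj_hom_def map_density_def homs_def inj_maps_def
  by (rule arg_cong[where f = "\<lambda>c. real (card c) / _"]) auto

lemma t_inj_no_edges:
  "finite VF \<Longrightarrow> finite V \<Longrightarrow> card VF \<le> card V \<Longrightarrow> t_inj VF {} V H = 1"
  using card_inj_maps[of VF V] falling_pos[of "card VF" "card V"]
  by (simp add: t_inj_eq_map_density map_density_def homs_def)

lemma map_density_inj_maps_Diff:
  assumes "finite A" "finite B" "card A \<le> card B" "X \<subseteq> inj_maps A B"
  shows "map_density A B (inj_maps A B - X) = 1 - map_density A B X"
proof -
  have "finite (inj_maps A B)" using assms by (simp add: finite_inj_maps)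
  then have "card (inj_maps A B - X) = card (inj_maps A B) - card X"
    "card X \<le> card (inj_maps A B)"
    using assms(4) by (auto simp: card_Diff_subset finite_subset card_mono)
  then show ?thesis
    using assms falling_pos[of "card A" "card B"]
    by (simp add: map_density_def card_inj_maps of_nat_diff field_simps)
qed

lemma card_homs_insert_le:
  assumes "kgraph k VF EF" "finite V" "e \<subseteq> V" "card e = k"
  shows "card (homs VF EF V (insert e G))
    \<le> card (homs VF EF V G) + card EF * (k ^ k * card V ^ (card VF - k))"
proof -
  have VF: "finite VF" and EF: "\<And>d. d \<in> EF \<Longrightarrow> d \<subseteq> VF \<and> card d = k" "finite EF"
    using assms(1) unfolding kgraph_def by (auto intro: finite_subset[of EF "Pow VF"])
  have "finite e" using assms(2,3) finite_subset by blast
  let ?P = "\<lambda>d. PiE VF (\<lambda>x. if x \<in> d then e else V)"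
  have cover: "homs VF EF V (insert e G) \<subseteq> homs VF EF V G \<union> (\<Union>d\<in>EF. ?P d)"
  proof
    fix f assume f: "f \<in> homs VF EF V (insert e G)"
    show "f \<in> homs VF EF V G \<union> (\<Union>d\<in>EF. ?P d)"
    proof (cases "\<forall>d\<in>EF. f ` d \<in> G")
      case True
      then show ?thesis using f unfolding homs_def by auto
    next
      case False
      then obtain d where "d \<in> EF" "f ` d = e" using f unfolding homs_def by auto
      then show ?thesis using f unfolding homs_def inj_maps_def by (auto simp: PiE_iff)
    qed
  qed
  have card_P: "card (?P d) = k ^ k * card V ^ (card VF - k)" if "d \<in> EF" for d
  proof -
    have d: "d \<subseteq> VF" "card d = k" using EF(1) that by auto
    have "card (?P d) = (\<Prod>x\<in>VF - d. card V) * (\<Prod>x\<in>d. card e)"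
      using prod.subset_diff[OF d(1) VF, of "\<lambda>x. card (if x \<in> d then e else V)"] VF
      by (simp add: card_PiE)
    then show ?thesis
      using d VF assms(4) by (simp add: card_Diff_subset finite_subset)
  qed
  have "card (homs VF EF V (insert e G)) \<le> card (homs VF EF V G \<union> (\<Union>d\<in>EF. ?P d))"
    using cover VF assms(2) EF(2) \<open>finite e\<close> by (intro card_mono) (auto intro!: finite_homs finite_PiE)
  also have "\<dots> \<le> card (homs VF EF V G) + card (\<Union>d\<in>EF. ?P d)"
    by (rule card_Un_le)
  also have "\<dots> \<le> card (homs VF EF V G) + (\<Sum>d\<in>EF. card (?P d))"
    using card_UN_le[OF EF(2)] by (rule add_left_mono)
  finally show ?thesis using card_P by simp
qed

lemma t_inj_sym_diff_singleton_le:
  assumes F: "kgraph k VF EF" and V: "finite V" "e \<subseteq> V" "card e = k" "card VF \<le> card V"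
  shows "\<bar>t_inj VF EF V G - t_inj VF EF V (sym_diff G {e})\<bar>
    \<le> real (card EF * (k ^ k * card V ^ (card VF - k))) / real (falling (card V) (card VF))"
proof -
  define D where "D = card EF * (k ^ k * card V ^ (card VF - k))"
  define c where "c G = card (homs VF EF V G)" for G
  have "finite VF" using F unfolding kgraph_def by simp
  have "homs VF EF V (G - {e}) \<subseteq> homs VF EF V (insert e G)" by (rule homs_mono) auto
  then have bounds: "c (G - {e}) \<le> c (insert e G)" "c (insert e G) \<le> c (G - {e}) + D"
    using card_mono[OF finite_homs[OF \<open>finite VF\<close> V(1)]]
      card_homs_insert_le[OF F V(1-3), of "G - {e}"] unfolding c_def D_def by simp_all
  have "\<bar>real (c G) - real (c (sym_diff G {e}))\<bar> \<le> real D"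
  proof (cases "e \<in> G")
    case True
    then have "insert e G = G" "sym_diff G {e} = G - {e}" by auto
    then show ?thesis using bounds by simp
  next
    case False
    then have "G - {e} = G" "sym_diff G {e} = insert e G" by auto
    then show ?thesis using bounds by simp
  qed
  moreover have "0 < real (falling (card V) (card VF))" using falling_pos[OF V(4)] by simp
  ultimately show ?thesis
    unfolding t_inj_eq_map_density map_density_def c_def D_def
    by (simp add: diff_divide_distrib[symmetric] divide_right_mono)
qed

section \<open>Averaging over m-subsets\<close>

lemma card_supersets:
  assumes V: "finite V" and B: "B \<subseteq> V" "card B \<le> m"
  shows "card {W. W \<subseteq> V \<and> card W = m \<and> B \<subseteq> W} = (card V - card B) choose (m - card B)"
proof -
  have fB: "finite B" using V B finite_subset by blast
  have "{W. W \<subseteq> V \<and> card W = m \<and> B \<subseteq> W} = (\<lambda>U. U \<union> B) ` {U. U \<subseteq> V - B \<and> card U = m - card B}"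
  proof (rule set_eqI, rule iffI)
    fix W assume W: "W \<in> {W. W \<subseteq> V \<and> card W = m \<and> B \<subseteq> W}"
    then have "W = (W - B) \<union> B" "card (W - B) = m - card B"
      using fB by (auto simp: card_Diff_subset)
    then show "W \<in> (\<lambda>U. U \<union> B) ` {U. U \<subseteq> V - B \<and> card U = m - card B}" using W by blast
  next
    fix W assume "W \<in> (\<lambda>U. U \<union> B) ` {U. U \<subseteq> V - B \<and> card U = m - card B}"
    then obtain U where U: "U \<subseteq> V - B" "card U = m - card B" "W = U \<union> B" by auto
    moreover have "finite U" using U(1) V finite_subset by blast
    ultimately have "card W = card U + card B"
      using fB by (simp add: card_Un_disjoint disjoint_iff subset_iff)
    then show "W \<in> {W. W \<subseteq> V \<and> card W = m \<and> B \<subseteq> W}" using U B by auto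
  qed
  moreover have "inj_on (\<lambda>U. U \<union> B) {U. U \<subseteq> V - B \<and> card U = m - card B}"
    by (rule inj_onI) blast
  ultimately show ?thesis
    using n_subsets[of "V - B" "m - card B"] V B by (simp add: card_image card_Diff_subset fB)
qed

lemma inj_maps_iff_image_subset:
  "f \<in> inj_maps A B \<Longrightarrow> f \<in> inj_maps A W \<longleftrightarrow> f ` A \<subseteq> W"
  unfolding inj_maps_def by (auto simp: PiE_iff)

lemma sum_card_Int_inj_maps_subsets:
  assumes fin: "finite A" "finite B" and Y: "Y \<subseteq> inj_maps A B" and m: "card A \<le> m"
  shows "(\<Sum>W | W \<subseteq> B \<and> card W = m. card (Y \<inter> inj_maps A W))
    = card Y * ((card B - card A) choose (m - card A))"
proof -
  define Ws where "Ws = {W. W \<subseteq> B \<and> card W = m}"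
  have "finite Ws" unfolding Ws_def using fin(2) by (simp add: finite_subset[of _ "Pow B"])
  have "finite Y" using Y finite_subset finite_inj_maps[OF fin] by blast
  have "(\<Sum>W\<in>Ws. card (Y \<inter> inj_maps A W)) = (\<Sum>W\<in>Ws. \<Sum>f\<in>Y. of_bool (f \<in> inj_maps A W))"
    using \<open>finite Y\<close> by (simp add: Int_def conj_commute)
  also have "\<dots> = (\<Sum>f\<in>Y. \<Sum>W\<in>Ws. of_bool (f \<in> inj_maps A W))"
    by (rule sum.swap)
  also have "\<dots> = (\<Sum>f\<in>Y. (card B - card A) choose (m - card A))"
  proof (rule sum.cong[OF refl])
    fix f assume "f \<in> Y"
    then have f: "f \<in> inj_maps A B" using Y by blast
    then have "f ` A \<subseteq> B" "card (f ` A) = card A"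
      unfolding inj_maps_def by (auto simp: card_image)
    moreover have "Ws \<inter> {W. f \<in> inj_maps A W} = {W. W \<subseteq> B \<and> card W = m \<and> f ` A \<subseteq> W}"
      using inj_maps_iff_image_subset[OF f] unfolding Ws_def by auto
    ultimately show "(\<Sum>W\<in>Ws. of_bool (f \<in> inj_maps A W)) = (card B - card A) choose (m - card A)"
      using card_supersets[OF fin(2), of "f ` A" m] \<open>finite Ws\<close> m by simp
  qed
  finally show ?thesis unfolding Ws_def by simp
qed

lemma exists_subset_few_maps_inside:
  assumes fin: "finite A" "finite B" and X: "X \<subseteq> inj_maps A B" and m: "card A \<le> m" "m \<le> card B"
  shows "\<exists>W\<subseteq>B. card W = m \<and>
    card (X \<inter> inj_maps A W) * falling (card B) (card A) \<le> card X * falling m (card A)"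
proof (rule ccontr)
  define Ws where "Ws = {W. W \<subseteq> B \<and> card W = m}"
  define N where "N = falling (card B) (card A)"
  define c where "c = (card B - card A) choose (m - card A)"
  have "finite Ws" unfolding Ws_def using fin(2) by (simp add: finite_subset[of _ "Pow B"])
  have "card (inj_maps A B \<inter> inj_maps A W) = falling m (card A)" if "W \<in> Ws" for W
  proof -
    have W: "W \<subseteq> B" "card W = m" "finite W" using that fin(2) finite_subset unfolding Ws_def by auto
    then show ?thesis using card_inj_maps[OF fin(1) W(3)] Int_absorb1[OF inj_maps_mono[OF W(1), of A]] by simp
  qed
  then have total: "card Ws * falling m (card A) = N * c"
    using sum_card_Int_inj_maps_subsets[OF fin order_refl m(1)] card_inj_maps[OF fin]
    unfolding Ws_def[symmetric] N_def c_def by simp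
  assume "\<not> ?thesis"
  then have more: "card X * falling m (card A) < card (X \<inter> inj_maps A W) * N" if "W \<in> Ws" for W
    using that unfolding Ws_def N_def by (auto simp: not_le)
  have "Ws \<noteq> {}"
    using obtain_subset_with_card_n[OF m(2)] unfolding Ws_def by blast
  then have "(\<Sum>W\<in>Ws. card X * falling m (card A)) < (\<Sum>W\<in>Ws. card (X \<inter> inj_maps A W) * N)"
    using \<open>finite Ws\<close> more by (intro sum_strict_mono) auto
  also have "\<dots> = card X * c * N"
    using sum_card_Int_inj_maps_subsets[OF fin X m(1)]
    unfolding Ws_def[symmetric] c_def by (simp add: sum_distrib_right[symmetric])
  also have "\<dots> = (\<Sum>W\<in>Ws. card X * falling m (card A))"
    using total by simp
  finally show False by simp
qed

lemma card_add_le_card_add_Int: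
  assumes "finite Y" "X \<union> Z \<subseteq> Y"
  shows "card X + card Z \<le> card Y + card (X \<inter> Z)"
proof -
  have "finite X" "finite Z" using assms finite_subset by blast+
  then have "card X + card Z = card (X \<union> Z) + card (X \<inter> Z)" by (rule card_Un_Int)
  then show ?thesis using card_mono[OF assms] by simp
qed

lemma exists_subset_density_boost:
  assumes fin: "finite A" "finite B" and X: "X \<subseteq> inj_maps A B" and m: "card A \<le> m" "m \<le> card B"
  obtains W where "W \<subseteq> B" "card W = m"
    "\<And>Y. X \<union> inj_maps A W \<subseteq> Y \<Longrightarrow> Y \<subseteq> inj_maps A B \<Longrightarrow>
       map_density A B X + real (falling m (card A)) / real (falling (card B) (card A)) * (1 - map_density A B X)
       \<le> map_density A B Y"
proof -
  define N where "N = real (falling (card B) (card A))"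
  obtain W where W: "W \<subseteq> B" "card W = m"
    and few: "card (X \<inter> inj_maps A W) * falling (card B) (card A) \<le> card X * falling m (card A)"
    using exists_subset_few_maps_inside[OF fin X m] by blast
  have N: "0 < N" unfolding N_def using falling_pos[of "card A" "card B"] m by simp
  have "finite W" using W(1) fin(2) finite_subset by blast
  have "map_density A B X + real (falling m (card A)) / N * (1 - map_density A B X) \<le> map_density A B Y"
    if Y: "X \<union> inj_maps A W \<subseteq> Y" "Y \<subseteq> inj_maps A B" for Y
  proof -
    have "finite Y" using Y(2) finite_inj_maps[OF fin] finite_subset by blast
    from card_add_le_card_add_Int[OF this Y(1)]
    have "card X + falling m (card A) \<le> card Y + card (X \<inter> inj_maps A W)"
      using card_inj_maps[OF fin(1) \<open>finite W\<close>] W(2) by simp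
    then have "real (card X) + real (falling m (card A)) \<le> real (card Y) + real (card (X \<inter> inj_maps A W))"
      by (simp only: of_nat_add[symmetric] of_nat_le_iff)
    then have "(real (card X) + real (falling m (card A))) * N
        \<le> real (card Y) * N + real (card (X \<inter> inj_maps A W)) * N"
      using N by (simp add: mult_right_mono flip: distrib_right)
    moreover have "real (card (X \<inter> inj_maps A W)) * N \<le> real (card X) * real (falling m (card A))"
      using few unfolding N_def by (simp only: of_nat_mult[symmetric] of_nat_le_iff)
    ultimately have key: "(real (card X) + real (falling m (card A))) * N
        \<le> real (card Y) * N + real (card X) * real (falling m (card A))"
      by linarith
    have "map_density A B X + real (falling m (card A)) / N * (1 - map_density A B X)
        = ((real (card X) + real (falling m (card A))) * N - real (card X) * real (falling m (card A))) / N\<^sup>2"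
      using N unfolding map_density_def N_def[symmetric] by (simp add: field_simps power2_eq_square)
    also have "\<dots> \<le> real (card Y) * N / N\<^sup>2"
      using key by (intro divide_right_mono) auto
    also have "\<dots> = map_density A B Y"
      using N unfolding map_density_def N_def[symmetric] by (simp add: power2_eq_square)
    finally show ?thesis .
  qed
  then show ?thesis using that W unfolding N_def by blast
qed

section \<open>Discrete intermediate values\<close>

lemma exists_subset_close_value_upward:
  fixes g :: "'a set \<Rightarrow> real"
  assumes S: "finite S" and "0 \<le> s" and ends: "g {} \<le> a" "a \<le> g S"
    and step: "\<And>A e. A \<subseteq> S \<Longrightarrow> e \<in> A \<Longrightarrow> g A \<le> g (A - {e}) + s"
  shows "\<exists>A\<subseteq>S. \<bar>g A - a\<bar> \<le> s"
proof -
  \<comment> \<open>a smallest A \<subseteq> S with g A \<ge> a works, since g (A - {e}) < a\<close>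
  obtain A where A: "A \<subseteq> S" "a \<le> g A"
    and least: "\<And>B. B \<subseteq> S \<Longrightarrow> a \<le> g B \<Longrightarrow> card A \<le> card B"
    using ex_has_least_nat[of "\<lambda>B. B \<subseteq> S \<and> a \<le> g B" S card] ends(2) by blast
  show ?thesis
  proof (cases "A = {}")
    case True
    then show ?thesis using A ends(1) \<open>0 \<le> s\<close> by (intro exI[of _ A]) auto
  next
    case False
    then obtain e where e: "e \<in> A" by auto
    have "card (A - {e}) < card A"
      using e A(1) S by (meson card_Diff1_less finite_subset)
    then have "g (A - {e}) < a" using least[of "A - {e}"] A(1) by force
    then show ?thesis using A step[OF A(1) e] by (intro exI[of _ A]) auto
  qed
qed

lemma exists_subset_close_value:
  fixes g :: "'a set \<Rightarrow> real"
  assumes S: "finite S" "0 \<le> s" and between: "min (g {}) (g S) \<le> a" "a \<le> max (g {}) (g S)"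
    and step: "\<And>A e. A \<subseteq> S \<Longrightarrow> e \<in> A \<Longrightarrow> \<bar>g A - g (A - {e})\<bar> \<le> s"
  shows "\<exists>A\<subseteq>S. \<bar>g A - a\<bar> \<le> s"
proof (cases "g {} \<le> g S")
  case True
  show ?thesis
  proof (rule exists_subset_close_value_upward[OF S])
    fix A e assume "A \<subseteq> S" "e \<in> A"
    then show "g A \<le> g (A - {e}) + s" using step[of A e] by (simp add: abs_le_iff)
  qed (use True between in auto)
next
  case False
  have "\<exists>A\<subseteq>S. \<bar>- g A - - a\<bar> \<le> s"
  proof (rule exists_subset_close_value_upward[OF S])
    fix A e assume "A \<subseteq> S" "e \<in> A"
    then show "- g A \<le> - g (A - {e}) + s" using step[of A e] by (simp add: abs_le_iff)
  qed (use False between in auto)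
  then show ?thesis by (simp add: abs_minus_commute)
qed

lemma exists_sym_diff_close_value:
  fixes \<tau> :: "'a set \<Rightarrow> real"
  assumes S: "finite S" "0 \<le> s"
    and step: "\<And>G e. e \<in> S \<Longrightarrow> \<bar>\<tau> G - \<tau> (sym_diff G {e})\<bar> \<le> s"
    and between: "min (\<tau> H) (\<tau> (sym_diff H S)) \<le> a" "a \<le> max (\<tau> H) (\<tau> (sym_diff H S))"
  shows "\<exists>A\<subseteq>S. \<bar>\<tau> (sym_diff H A) - a\<bar> \<le> s"
proof (rule exists_subset_close_value[OF S(1,2)])
  fix A e assume "A \<subseteq> S" "e \<in> A"
  then have eq: "sym_diff H (A - {e}) = sym_diff (sym_diff H A) {e}" and "e \<in> S" by blast+
  show "\<bar>\<tau> (sym_diff H A) - \<tau> (sym_diff H (A - {e}))\<bar> \<le> s"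
    unfolding eq by (rule step) fact
qed (use between in simp_all)

section \<open>Adding or deleting a clique\<close>

abbreviation complete_kgraph :: "nat \<Rightarrow> 'a set \<Rightarrow> 'a set set" where
  "complete_kgraph k W \<equiv> {e. e \<subseteq> W \<and> card e = k}"

lemma inj_maps_subset_homs_add_clique:
  assumes F: "kgraph k VF EF" and W: "W \<subseteq> V"
  shows "inj_maps VF W \<subseteq> homs VF EF V (H \<union> complete_kgraph k W)"
proof
  fix f assume f: "f \<in> inj_maps VF W"
  have "f ` d \<in> complete_kgraph k W" if "d \<in> EF" for d
    using inj_maps_image_card[OF f] F that unfolding kgraph_def by simp
  then show "f \<in> homs VF EF V (H \<union> complete_kgraph k W)"
    using f inj_maps_mono[OF W] unfolding homs_def by blast
qed

lemma inj_maps_disjoint_homs_remove_clique: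
  assumes "kgraph k VF EF" "EF \<noteq> {}"
  shows "inj_maps VF W \<inter> homs VF EF V (H - complete_kgraph k W) = {}"
proof -
  obtain d where d: "d \<in> EF" "d \<subseteq> VF" "card d = k" using assms unfolding kgraph_def by blast
  have "f ` d \<in> complete_kgraph k W" if "f \<in> inj_maps VF W" for f
    using inj_maps_image_card[OF that d(2,3)] by simp
  then show ?thesis using d(1) unfolding homs_def by blast
qed

lemma exists_clique_add_t_inj_ge:
  assumes F: "kgraph k VF EF" and V: "finite V" and m: "card VF \<le> m" "m \<le> card V"
  obtains W where "W \<subseteq> V" "card W = m"
    "t_inj VF EF V H + real (falling m (card VF)) / real (falling (card V) (card VF))
       * (1 - t_inj VF EF V H) \<le> t_inj VF EF V (H \<union> complete_kgraph k W)"
proof -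
  have VF: "finite VF" using F unfolding kgraph_def by simp
  obtain W where W: "W \<subseteq> V" "card W = m" and gain: "\<And>Y. homs VF EF V H \<union> inj_maps VF W \<subseteq> Y \<Longrightarrow>
      Y \<subseteq> inj_maps VF V \<Longrightarrow> map_density VF V (homs VF EF V H)
        + real (falling m (card VF)) / real (falling (card V) (card VF)) * (1 - map_density VF V (homs VF EF V H))
        \<le> map_density VF V Y"
    using exists_subset_density_boost[OF VF V homs_subset_inj_maps m] by blast
  have "homs VF EF V H \<subseteq> homs VF EF V (H \<union> complete_kgraph k W)" by (rule homs_mono) auto
  with inj_maps_subset_homs_add_clique[OF F W(1)]
  have "homs VF EF V H \<union> inj_maps VF W \<subseteq> homs VF EF V (H \<union> complete_kgraph k W)" by blast
  from gain[OF this homs_subset_inj_maps, folded t_inj_eq_map_density] show ?thesis by (rule that[OF W])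
qed

lemma exists_clique_remove_t_inj_le:
  assumes F: "kgraph k VF EF" "EF \<noteq> {}" and V: "finite V" and m: "card VF \<le> m" "m \<le> card V"
  obtains W where "W \<subseteq> V" "card W = m"
    "t_inj VF EF V (H - complete_kgraph k W)
       \<le> t_inj VF EF V H - real (falling m (card VF)) / real (falling (card V) (card VF)) * t_inj VF EF V H"
proof -
  let ?X = "\<lambda>G. inj_maps VF V - homs VF EF V G"
  have VF: "finite VF" using F unfolding kgraph_def by simp
  obtain W where W: "W \<subseteq> V" "card W = m" and gain: "\<And>Y. ?X H \<union> inj_maps VF W \<subseteq> Y \<Longrightarrow>
      Y \<subseteq> inj_maps VF V \<Longrightarrow> map_density VF V (?X H)
        + real (falling m (card VF)) / real (falling (card V) (card VF)) * (1 - map_density VF V (?X H))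
        \<le> map_density VF V Y"
    using exists_subset_density_boost[OF VF V Diff_subset m] by blast
  have "?X H \<subseteq> ?X (H - complete_kgraph k W)" using homs_mono[of _ H] by blast
  with inj_maps_disjoint_homs_remove_clique[OF F, of W V H] inj_maps_mono[OF W(1)]
  have "?X H \<union> inj_maps VF W \<subseteq> ?X (H - complete_kgraph k W)" by blast
  from gain[OF this Diff_subset]
  have "1 - t_inj VF EF V H + real (falling m (card VF)) / real (falling (card V) (card VF)) * t_inj VF EF V H
      \<le> 1 - t_inj VF EF V (H - complete_kgraph k W)"
    unfolding map_density_inj_maps_Diff[OF VF V order_trans[OF m] homs_subset_inj_maps]
      t_inj_eq_map_density by simp
  then show ?thesis by (intro that[OF W]) linarith
qed

lemma exists_clique_edges_bracketing:
  fixes \<alpha> \<nu> :: real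
  assumes F: "kgraph k VF EF" "EF \<noteq> {}" and V: "finite V"
    and close: "\<bar>t_inj VF EF V H - \<alpha>\<bar> \<le> \<nu>"
    and m: "card VF \<le> m" "m \<le> card V"
    and boost: "\<nu> \<le> real (falling m (card VF)) / real (falling (card V) (card VF)) * min \<alpha> (1 - \<alpha>)"
  obtains W S where "W \<subseteq> V" "card W = m" "S \<subseteq> complete_kgraph k W"
    "min (t_inj VF EF V H) (t_inj VF EF V (sym_diff H S)) \<le> \<alpha>"
    "\<alpha> \<le> max (t_inj VF EF V H) (t_inj VF EF V (sym_diff H S))"
proof -
  let ?t = "t_inj VF EF V"
  define \<pi> where "\<pi> = real (falling m (card VF)) / real (falling (card V) (card VF))"
  have "0 \<le> \<pi>" unfolding \<pi>_def by simp
  then have \<pi>: "\<nu> \<le> \<pi> * \<alpha>" "\<nu> \<le> \<pi> * (1 - \<alpha>)"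
    using boost unfolding \<pi>_def[symmetric] by (meson min.cobounded1 min.cobounded2 mult_left_mono order_trans)+
  have lower: "\<alpha> - \<nu> \<le> ?t H" and upper: "?t H \<le> \<alpha> + \<nu>" using close by (simp_all add: abs_le_iff)
  show ?thesis
  proof (cases "?t H \<le> \<alpha>")
    case True
    obtain W where W: "W \<subseteq> V" "card W = m"
      and gain: "?t H + \<pi> * (1 - ?t H) \<le> ?t (H \<union> complete_kgraph k W)"
      using exists_clique_add_t_inj_ge[OF F(1) V m] unfolding \<pi>_def by blast
    have "\<pi> * (1 - \<alpha>) \<le> \<pi> * (1 - ?t H)" using True \<open>0 \<le> \<pi>\<close> by (intro mult_left_mono) auto
    then have "\<alpha> \<le> ?t (H \<union> complete_kgraph k W)" using gain lower \<pi>(2) by linarith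
    moreover have "sym_diff H (complete_kgraph k W - H) = H \<union> complete_kgraph k W" by blast
    ultimately show ?thesis using True by (intro that[OF W, of "complete_kgraph k W - H"]) auto
  next
    case False
    obtain W where W: "W \<subseteq> V" "card W = m"
      and loss: "?t (H - complete_kgraph k W) \<le> ?t H - \<pi> * ?t H"
      using exists_clique_remove_t_inj_le[OF F V m] unfolding \<pi>_def by blast
    have "\<pi> * \<alpha> \<le> \<pi> * ?t H" using False \<open>0 \<le> \<pi>\<close> by (intro mult_left_mono) auto
    then have "?t (H - complete_kgraph k W) \<le> \<alpha>" using loss upper \<pi>(1) by linarith
    moreover have "sym_diff H (H \<inter> complete_kgraph k W) = H - complete_kgraph k W" by blast
    ultimately show ?thesis using False by (intro that[OF W, of "H \<inter> complete_kgraph k W"]) auto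
  qed
qed

lemma exists_close_kgraph_in_clique:
  fixes \<alpha> \<nu> :: real
  assumes F: "kgraph k VF EF" "EF \<noteq> {}" and H: "kgraph k V H" "0 < card V"
    and close: "\<bar>t_inj VF EF V H - \<alpha>\<bar> \<le> \<nu>"
    and m: "card VF \<le> m" "m \<le> card V"
    and boost: "\<nu> \<le> real (falling m (card VF)) / real (falling (card V) (card VF)) * min \<alpha> (1 - \<alpha>)"
    and step: "real (card EF * (k ^ k * card V ^ (card VF - k))) * real (card V)
      \<le> real (falling (card V) (card VF))"
  shows "\<exists>G. kgraph k V G \<and> \<bar>t_inj VF EF V G - \<alpha>\<bar> \<le> 1 / real (card V) \<and>
    card (sym_diff G H) \<le> m choose k"
proof -
  let ?t = "t_inj VF EF V"
  have V: "finite V" using H unfolding kgraph_def by simp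
  obtain W S where W: "W \<subseteq> V" "card W = m" and S: "S \<subseteq> complete_kgraph k W"
    and between: "min (?t H) (?t (sym_diff H S)) \<le> \<alpha>" "\<alpha> \<le> max (?t H) (?t (sym_diff H S))"
    using exists_clique_edges_bracketing[OF F V close m boost] by blast
  have "finite W" using W(1) V finite_subset by blast
  then have fin_K: "finite (complete_kgraph k W)" by (simp add: finite_subset[of _ "Pow W"])
  have step_S: "\<bar>?t G - ?t (sym_diff G {e})\<bar> \<le> 1 / real (card V)" if "e \<in> S" for G e
  proof -
    have "e \<subseteq> V" "card e = k" using that S W(1) by blast+
    from t_inj_sym_diff_singleton_le[OF F(1) V this order_trans[OF m]]
    have "\<bar>?t G - ?t (sym_diff G {e})\<bar>
        \<le> real (card EF * (k ^ k * card V ^ (card VF - k))) / real (falling (card V) (card VF))" .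
    also have "\<dots> \<le> 1 / real (card V)"
      using step H(2) falling_pos[OF order_trans[OF m]] by (simp add: field_simps)
    finally show ?thesis .
  qed
  have "finite S" using S fin_K finite_subset by blast
  moreover have "0 \<le> 1 / real (card V)" by simp
  ultimately obtain A where A: "A \<subseteq> S" "\<bar>?t (sym_diff H A) - \<alpha>\<bar> \<le> 1 / real (card V)"
    using exists_sym_diff_close_value[OF _ _ step_S between] by blast
  show ?thesis
  proof (intro exI conjI)
    have "\<forall>e\<in>A. e \<subseteq> V \<and> card e = k" using A(1) S W(1) by blast
    then show "kgraph k V (sym_diff H A)" using H(1) unfolding kgraph_def by blast
    have "card (sym_diff (sym_diff H A) H) = card A" by (rule arg_cong[where f = card]) auto
    also have "\<dots> \<le> card (complete_kgraph k W)" using A(1) S fin_K by (meson card_mono order_trans)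
    also have "\<dots> = m choose k" using n_subsets[OF \<open>finite W\<close>] W(2) by simp
    finally show "card (sym_diff (sym_diff H A) H) \<le> m choose k" .
  qed (use A in simp)
qed

section \<open>Choice of the parameters\<close>

lemma edge_bound_le_power:
  fixes k l n :: nat
  assumes k: "2 \<le> k" "k \<le> l" and n: "2 ^ (l + 1) * l ^ 2 \<le> n"
  shows "2 * (2 ^ l * (k ^ k * n ^ (l - k)) * n) \<le> n ^ l"
proof -
  have "l \<le> l ^ 2" by (simp add: power2_eq_square)
  also have "\<dots> \<le> 2 ^ (l + 1) * l ^ 2" by simp
  finally have "l \<le> n" using n by linarith
  have "k ^ k \<le> l ^ k" using k by (simp add: power_mono)
  also have "\<dots> = l ^ 2 * l ^ (k - 2)" using k by (metis le_add_diff_inverse power_add)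
  also have "\<dots> \<le> l ^ 2 * n ^ (k - 2)" using \<open>l \<le> n\<close> by (simp add: power_mono)
  finally have "2 * (2 ^ l * (k ^ k * n ^ (l - k)) * n) \<le> 2 ^ (l + 1) * l ^ 2 * (n ^ (k - 2) * n ^ (l - k) * n)"
    by (simp add: mult_le_mono)
  also have "n ^ (k - 2) * n ^ (l - k) * n = n ^ (k - 2 + (l - k) + 1)"
    by (simp add: power_add)
  also have "k - 2 + (l - k) + 1 = l - 1" using k by simp
  also have "2 ^ (l + 1) * l ^ 2 * n ^ (l - 1) \<le> n * n ^ (l - 1)"
    using n by (rule mult_right_mono) simp
  also have "\<dots> = n ^ l" using k by (simp flip: power_Suc)
  finally show ?thesis .
qed

lemma card_edges_step_le_falling:
  assumes F: "kgraph k VF EF" "card VF = l" and k: "2 \<le> k" "k \<le> l"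
    and n: "2 ^ (l + 1) * l ^ 2 \<le> n" "2 * l * (l + 1) \<le> n"
  shows "real (card EF * (k ^ k * n ^ (l - k))) * real n \<le> real (falling n l)"
proof -
  have "real (2 * l * (l + 1)) \<le> real n" using n(2) by (simp only: of_nat_le_iff)
  then have "real n ^ l / 2 \<le> real (falling n l)"
    by (intro half_power_le_falling) (simp_all add: algebra_simps)
  moreover have "card EF \<le> 2 ^ l"
    using F card_mono[of "Pow VF" EF] unfolding kgraph_def by (auto simp: card_Pow)
  then have "card EF * (k ^ k * n ^ (l - k)) * n \<le> 2 ^ l * (k ^ k * n ^ (l - k)) * n" by simp
  then have "real (2 * (card EF * (k ^ k * n ^ (l - k)) * n)) \<le> real (n ^ l)"
    using edge_bound_le_power[OF k n(1)] by (simp only: of_nat_le_iff)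
  ultimately show ?thesis by simp
qed

lemma choose_le_ratio_mult_choose:
  assumes "0 < k" "m \<le> n" "0 < n"
  shows "real (m choose k) \<le> real m / real n * real (n choose k)"
proof -
  have "k * (n * (m choose k)) = n * (m * ((m - 1) choose (k - 1)))"
    using times_binomial_minus1_eq[OF assms(1), of m] by simp
  also have "\<dots> \<le> n * (m * ((n - 1) choose (k - 1)))"
    using binomial_right_mono[of "m - 1" "n - 1"] assms(2) by simp
  also have "\<dots> = k * (m * (n choose k))"
    using times_binomial_minus1_eq[OF assms(1), of n] by simp
  finally have "real (n * (m choose k)) \<le> real (m * (n choose k))"
    using assms(1) by (simp only: of_nat_le_iff mult_le_cancel1)
  then show ?thesis using assms(3) by (simp add: field_simps)
qed

lemma half_power_le_falling_ratio:
  fixes \<delta> :: real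
  assumes "0 \<le> \<delta>" "\<delta> * real n \<le> real m + 1" "2 * real l * (real l + 1) \<le> \<delta> * real n" "l \<le> n"
  shows "\<delta> ^ l / 2 \<le> real (falling m l) / real (falling n l)"
proof -
  have "real (falling n l) \<le> real n ^ l"
    using falling_le_power[of n l] by (simp only: of_nat_power[symmetric] of_nat_le_iff)
  then have "\<delta> ^ l * real (falling n l) / 2 \<le> \<delta> ^ l * real n ^ l / 2"
    using assms(1) by (intro divide_right_mono mult_left_mono) auto
  also have "\<dots> = (\<delta> * real n) ^ l / 2" by (simp add: power_mult_distrib)
  also have "\<dots> \<le> real (falling m l)" by (rule half_power_le_falling[OF assms(2,3)])
  finally show ?thesis
    using falling_pos[OF assms(4)] by (simp add: field_simps)
qed

definition size_threshold :: "real \<Rightarrow> real \<Rightarrow> real" where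
  "size_threshold \<nu> z = \<nu> * z\<^sup>2 * 2 powr (- 1 / z) / 8"

lemma size_threshold_pos: "0 < \<nu> \<Longrightarrow> 0 < z \<Longrightarrow> 0 < size_threshold \<nu> z"
  unfolding size_threshold_def by simp

lemma size_threshold_mono:
  assumes "0 < \<nu>" "0 < z" "\<nu> \<le> \<nu>'" "z \<le> z'"
  shows "size_threshold \<nu> z \<le> size_threshold \<nu>' z'"
proof -
  have "1 / z' \<le> 1 / z" using assms by (intro divide_left_mono) auto
  then have "2 powr (- 1 / z) \<le> 2 powr (- 1 / z')" by (intro powr_mono) auto
  moreover have "\<nu> * z\<^sup>2 \<le> \<nu>' * z'\<^sup>2" using assms by (intro mult_mono power_mono) auto
  ultimately show ?thesis
    unfolding size_threshold_def using assms by (intro divide_right_mono mult_mono) auto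
qed

lemma size_threshold_of_nat:
  "1 \<le> l \<Longrightarrow> size_threshold \<nu> (1 / real l) = \<nu> / (8 * real l ^ 2 * 2 ^ l)"
  unfolding size_threshold_def
  by (simp add: powr_minus_divide powr_realpow power_one_over field_simps)

lemma exists_close_kgraph_scaled:
  fixes \<alpha> \<nu> \<delta> :: real
  assumes F: "kgraph k VF EF" "EF \<noteq> {}" "card VF = l" "0 < k"
    and H: "kgraph k V H" "card V = n" "0 < n"
    and \<alpha>: "0 < \<alpha>" "\<alpha> < 1" and close: "\<bar>t_inj VF EF V H - \<alpha>\<bar> \<le> \<nu>"
    and \<delta>: "0 \<le> \<delta>" "\<delta> \<le> 1" "2 * real l * (real l + 1) \<le> \<delta> * real n"
      "\<nu> \<le> \<delta> ^ l / 2 * min \<alpha> (1 - \<alpha>)"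
    and step: "real (card EF * (k ^ k * n ^ (l - k))) * real n \<le> real (falling n l)"
  shows "\<exists>G. kgraph k V G \<and> \<bar>t_inj VF EF V G - \<alpha>\<bar> \<le> 1 / real n \<and>
    real (card (sym_diff G H)) \<le> \<delta> * real (n choose k)"
proof -
  define m where "m = nat \<lfloor>\<delta> * real n\<rfloor>"
  have m: "real m \<le> \<delta> * real n" "\<delta> * real n \<le> real m + 1"
    using \<delta>(1) unfolding m_def by (auto simp: of_nat_nat)
  have "\<delta> * real n \<le> 1 * real n" using \<delta>(2) by (intro mult_right_mono) auto
  then have "m \<le> n" using m(1) by simp
  have "l \<noteq> 0" using F unfolding kgraph_def by (auto simp: card_eq_0_iff)
  then have "1 * (real l + 1) \<le> 2 * real l * (real l + 1)" by (intro mult_right_mono) auto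
  then have "real l + 1 \<le> 2 * real l * (real l + 1)" by simp
  then have "real l \<le> real m" using \<delta>(3) m(2) by linarith
  then have "l \<le> m" by simp
  have "\<delta> ^ l / 2 * min \<alpha> (1 - \<alpha>) \<le> real (falling m l) / real (falling n l) * min \<alpha> (1 - \<alpha>)"
    using half_power_le_falling_ratio[OF \<delta>(1) m(2) \<delta>(3)] \<open>l \<le> m\<close> \<open>m \<le> n\<close> \<alpha>
    by (intro mult_right_mono) auto
  then have "\<nu> \<le> real (falling m l) / real (falling n l) * min \<alpha> (1 - \<alpha>)"
    using \<delta>(4) by linarith
  then obtain G where G: "kgraph k V G" "\<bar>t_inj VF EF V G - \<alpha>\<bar> \<le> 1 / real n"
    "card (sym_diff G H) \<le> m choose k"
    using exists_close_kgraph_in_clique[OF F(1,2) H(1) _ close, of m] H(2,3) F(3) \<open>l \<le> m\<close> \<open>m \<le> n\<close> step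
    by auto
  have "real (m choose k) \<le> real m / real n * real (n choose k)"
    by (rule choose_le_ratio_mult_choose) (use F(4) H(3) \<open>m \<le> n\<close> in auto)
  also have "\<dots> \<le> \<delta> * real (n choose k)"
    using m(1) H(3) by (intro mult_right_mono) (auto simp: field_simps)
  finally show ?thesis using G by (intro exI[of _ G]) auto
qed

lemma size_threshold_bounds:
  fixes \<nu> :: real
  assumes n: "1 \<le> l" "0 < n" "1 / real n \<le> size_threshold \<nu> (1 / real l)" and \<nu>: "\<nu> \<le> 1 / 8"
  shows "2 * real l * (real l + 1) \<le> 4 * \<nu> * real n" "2 ^ (l + 1) * l ^ 2 \<le> n" "2 * l * (l + 1) \<le> n"
proof -
  have n_large: "8 * (real l ^ 2 * 2 ^ l) \<le> \<nu> * real n"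
    using n by (simp add: size_threshold_of_nat field_simps)
  also have "\<dots> \<le> 1 / 8 * real n" using \<nu> by (intro mult_right_mono) auto
  finally have "real (64 * l ^ 2 * 2 ^ l) \<le> real n" by simp
  then have n_ge: "64 * l ^ 2 * 2 ^ l \<le> n" by (simp only: of_nat_le_iff)
  have "l \<le> l ^ 2" by (simp add: power2_eq_square)
  then have "2 * l * (l + 1) \<le> 4 * l ^ 2" by (simp add: power2_eq_square algebra_simps)
  also have "\<dots> \<le> 4 * l ^ 2 * 2 ^ l" by simp
  finally have l_small: "2 * l * (l + 1) \<le> 4 * l ^ 2 * 2 ^ l" .
  have "2 ^ (l + 1) * l ^ 2 \<le> 64 * l ^ 2 * 2 ^ l" "4 * l ^ 2 * 2 ^ l \<le> 64 * l ^ 2 * 2 ^ l"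
    by simp_all
  then show "2 ^ (l + 1) * l ^ 2 \<le> n" "2 * l * (l + 1) \<le> n" using n_ge l_small by linarith+
  have "real (2 * l * (l + 1)) \<le> real (4 * l ^ 2 * 2 ^ l)"
    using l_small by (simp only: of_nat_le_iff)
  then have "2 * real l * (real l + 1) \<le> 4 * (real l ^ 2 * 2 ^ l)" by (simp add: algebra_simps)
  also have "\<dots> \<le> 4 * (\<nu> * real n)"
  proof -
    have "0 \<le> real l ^ 2 * 2 ^ l" by simp
    with n_large show ?thesis by linarith
  qed
  finally show "2 * real l * (real l + 1) \<le> 4 * \<nu> * real n" by simp
qed

lemma exists_close_kgraph:
  fixes \<alpha> \<nu> :: real
  assumes \<alpha>: "0 < \<alpha>" "\<alpha> < 1" and k: "2 \<le> k" and \<nu>: "0 < \<nu>" "\<nu> \<le> min \<alpha> (1 - \<alpha>) / 4"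
    and n: "1 \<le> l" "0 < n" "1 / real n \<le> size_threshold \<nu> (1 / real l)"
    and F: "kgraph k VF EF" "card VF = l" and H: "kgraph k V H" "card V = n"
    and close: "\<bar>t_inj VF EF V H - \<alpha>\<bar> \<le> \<nu>"
  shows "\<exists>G. kgraph k V G \<and> \<bar>t_inj VF EF V G - \<alpha>\<bar> \<le> 1 / real n \<and>
    real (card (sym_diff G H)) \<le> (2 * \<nu> / min \<alpha> (1 - \<alpha>)) powr (1 / real l) * real (n choose k)"
proof -
  define \<mu> where "\<mu> = min \<alpha> (1 - \<alpha>)"
  define \<delta> where "\<delta> = (2 * \<nu> / \<mu>) powr (1 / real l)"
  have \<mu>: "0 < \<mu>" "4 * \<nu> \<le> \<mu>" "\<mu> \<le> 1 / 2" using \<alpha> \<nu> unfolding \<mu>_def by (auto simp: min_def)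
  then have bounds: "2 * real l * (real l + 1) \<le> 4 * \<nu> * real n" "2 ^ (l + 1) * l ^ 2 \<le> n"
    "2 * l * (l + 1) \<le> n"
    using size_threshold_bounds[OF n] by simp_all
  have "l \<le> n" using bounds(3) by (simp add: algebra_simps)
  have "EF \<noteq> {}"
  proof
    assume "EF = {}"
    have "t_inj VF {} V H = 1"
      by (rule t_inj_no_edges) (use F H \<open>l \<le> n\<close> in \<open>auto simp: kgraph_def\<close>)
    with \<open>EF = {}\<close> have "t_inj VF EF V H = 1" by simp
    then show False using close \<mu> \<alpha> unfolding \<mu>_def by (simp add: abs_le_iff)
  qed
  then obtain d where "d \<in> EF" by blast
  then have "k \<le> l" using F card_mono[of VF d] unfolding kgraph_def by fastforce
  have y: "4 * \<nu> \<le> 2 * \<nu> / \<mu>" "0 \<le> 2 * \<nu> / \<mu>" "2 * \<nu> / \<mu> \<le> 1"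
    using \<mu> \<nu> by (auto simp: field_simps)
  have "\<delta> ^ l = 2 * \<nu> / \<mu>"
    using \<mu> \<nu> n(1) by (simp add: \<delta>_def powr_realpow[symmetric] powr_powr)
  then have boost: "\<nu> \<le> \<delta> ^ l / 2 * min \<alpha> (1 - \<alpha>)"
    using \<mu>(1) unfolding \<mu>_def[symmetric] by simp
  have \<delta>01: "0 \<le> \<delta>" "\<delta> \<le> 1" using y unfolding \<delta>_def by (auto intro: powr_le1)
  have "4 * \<nu> \<le> \<delta>"
    using powr_mono'[of "1 / real l" 1 "2 * \<nu> / \<mu>"] y n(1) \<mu> \<nu> unfolding \<delta>_def by simp
  then have "4 * \<nu> * real n \<le> \<delta> * real n" by (intro mult_right_mono) auto
  with bounds(1) have \<delta>n: "2 * real l * (real l + 1) \<le> \<delta> * real n" by linarith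
  have "0 < k" using k by simp
  from exists_close_kgraph_scaled[OF F(1) \<open>EF \<noteq> {}\<close> F(2) \<open>0 < k\<close> H n(2) \<alpha> close \<delta>01 \<delta>n boost
      card_edges_step_le_falling[OF F k \<open>k \<le> l\<close> bounds(2,3)]]
  show ?thesis unfolding \<delta>_def \<mu>_def .
qed

theorem proposition11p2:
  shows "\<exists>(f1 :: real \<Rightarrow> real \<Rightarrow> real) (f2 :: real \<Rightarrow> real \<Rightarrow> real \<Rightarrow> real).
    (\<forall>a b. 0 < a \<longrightarrow> 0 < b \<longrightarrow> 0 < f1 a b) \<and>
    (\<forall>a b a' b'. 0 < a \<longrightarrow> 0 < b \<longrightarrow> a \<le> a' \<longrightarrow> b \<le> b' \<longrightarrow> f1 a b \<le> f1 a' b') \<and>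
    (\<forall>x y z. 0 < x \<longrightarrow> 0 < y \<longrightarrow> 0 < z \<longrightarrow> 0 < f2 x y z) \<and>
    (\<forall>x y z x' y' z'. 0 < x \<longrightarrow> 0 < y \<longrightarrow> 0 < z \<longrightarrow> x \<le> x' \<longrightarrow> y \<le> y' \<longrightarrow> z \<le> z' \<longrightarrow>
        f2 x y z \<le> f2 x' y' z') \<and>
    (\<forall>(\<alpha>::real) (\<nu>::real) (k::nat) (l::nat) (n::nat)
       (VF::nat set) (EF::nat set set) (V::nat set) (H::nat set set).
       0 < \<alpha> \<longrightarrow> \<alpha> < 1 \<longrightarrow> 2 \<le> k \<longrightarrow> 1 \<le> l \<longrightarrow> 0 < n \<longrightarrow> 0 < \<nu> \<longrightarrow>
       \<nu> \<le> f1 \<alpha> (1 - \<alpha>) \<longrightarrow>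
       1 / real n \<le> f2 \<nu> (1 / real k) (1 / real l) \<longrightarrow>
       kgraph k VF EF \<longrightarrow> card VF = l \<longrightarrow>
       kgraph k V H \<longrightarrow> card V = n \<longrightarrow>
       \<bar>t_inj VF EF V H - \<alpha>\<bar> \<le> \<nu> \<longrightarrow>
       (\<exists>G. kgraph k V G \<and> \<bar>t_inj VF EF V G - \<alpha>\<bar> \<le> 1 / real n \<and>
            real (card (G - H \<union> (H - G)))
              \<le> (2 * \<nu> / min \<alpha> (1 - \<alpha>)) powr (1 / real l) * real (n choose k)))"
  \<comment> \<open>the size condition ignores k, as only k \<le> l enters the estimates\<close>
  apply (intro exI[of _ "\<lambda>a b. min a b / 4"] exI[of _ "\<lambda>x y z. size_threshold x z"] conjI allI impI)
  subgoal by simp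
  subgoal by (auto simp: min_le_iff_disj)
  subgoal by (simp add: size_threshold_pos)
  subgoal by (simp add: size_threshold_mono)
  subgoal by (rule exists_close_kgraph) simp_all
  done

end
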